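(* Let $Y$ be a linear subspace of $\mathcal H(\mathbb D)$ such that for every $h\in Y$ with $h\not\equiv0$, the zero sequence $\{\zeta_k\}$ of $h$ (counted with multiplicity) is a Blaschke sequence. Let $v$ be a weight on $\mathbb D$. Let $w\in\mathcal H(\mathbb D)$ with $w\not\equiv0$ and let $\varphi$ be an entire function with $\varphi\not\equiv 0$. Then the weighted superposition operator $S_{\varphi,w}$ maps $H^\infty_v$ into $Y$ if and only if $w\in Y$ and $\varphi$ is constant.
   Context: $\mathcal H(\mathbb D)$ is the space of analytic functions in the unit disc $\mathbb D$; $S_{\varphi,w}(f)(z)=w(z)\varphi(f(z))$ for $\varphi$ entire and $w\in\mathcal H(\mathbb D)$. A weight on $\mathbb D$ is a positive continuous function $v$ on $\mathbb D$ which is radial ($v(z)=v(|z|)$), with $r\mapsto v(r)$ strictly decreasing on $[0,1)$ and $\lim_{r\to1}v(r)=0$. $H^\infty_v=\{f\in\mathcal H(\mathbb D):\|f\|_v=\sup_{z\in\mathbb D}v(z)|f(z)|<\infty\}$. A sequence $\{z_k\}\subset\mathbb D$ is a Blaschke sequence if $\sum_k(1-|z_k|)<\infty$. *)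

theory Defs
  imports "HOL-Complex_Analysis.Complex_Analysis"
begin

text \<open>Analytic functions on the unit disc. Functions are total in HOL; a function
  f :: complex => complex represents an element of H(D) if it is holomorphic on the disc.\<close>
definition HD :: "(complex \<Rightarrow> complex) set" where
  "HD = {f. f holomorphic_on ball 0 1}"

text \<open>A linear subspace of H(D). Since elements of H(D) are functions on the disc,
  Y is required to be saturated: membership only depends on values on the disc.\<close>
definition HD_subspace :: "(complex \<Rightarrow> complex) set \<Rightarrow> bool" where
  "HD_subspace Y \<longleftrightarrow> Y \<subseteq> HD \<and> (\<lambda>z. 0) \<in> Y
     \<and> (\<forall>f\<in>Y. \<forall>g\<in>Y. (\<lambda>z. f z + g z) \<in> Y)
     \<and> (\<forall>c. \<forall>f\<in>Y. (\<lambda>z. c * f z) \<in> Y)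
     \<and> (\<forall>f g. f \<in> Y \<longrightarrow> (\<forall>z\<in>ball 0 1. g z = f z) \<longrightarrow> g \<in> Y)"

definition blaschke_zeros :: "(complex \<Rightarrow> complex) \<Rightarrow> bool" where
  "blaschke_zeros h \<longleftrightarrow>
     (\<lambda>z. real (nat (zorder h z)) * (1 - norm z)) summable_on {z \<in> ball 0 1. h z = 0}"

definition weight :: "(complex \<Rightarrow> real) \<Rightarrow> bool" where
  "weight v \<longleftrightarrow> continuous_on (ball 0 1) v
     \<and> (\<forall>z\<in>ball 0 1. v z > 0)
     \<and> (\<forall>z\<in>ball 0 1. v z = v (complex_of_real (norm z)))
     \<and> (\<forall>r s. 0 \<le> r \<and> r < s \<and> s < 1 \<longrightarrow> v (complex_of_real s) < v (complex_of_real r))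
     \<and> ((\<lambda>r. v (complex_of_real r)) \<longlongrightarrow> 0) (at_left 1)"

definition Hinf_v :: "(complex \<Rightarrow> real) \<Rightarrow> (complex \<Rightarrow> complex) set" where
  "Hinf_v v = {f. f holomorphic_on ball 0 1 \<and> (\<exists>C. \<forall>z\<in>ball 0 1. v z * norm (f z) \<le> C)}"

definition superpos_op :: "(complex \<Rightarrow> complex) \<Rightarrow> (complex \<Rightarrow> complex) \<Rightarrow> (complex \<Rightarrow> complex) \<Rightarrow> (complex \<Rightarrow> complex)" where
  "superpos_op \<phi> w f = (\<lambda>z. w z * \<phi> (f z))"

end

theory Submission
  imports Defs
begin

text \<open>Since v(r) tends to 0 as r tends to 1, the exponents N k of the lacunary product
  F(z) = \<Prod>(1 + 2 z^(N k)) can be chosen to grow so fast that F lies in the weighted space.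
  F(0) = 1, and F vanishes at the N k-th roots of -1/2; these satisfy 1 - |z| \<ge> 1/(2 N k),
  so each block of roots contributes at least 1/2 to \<Sum>(1 - |z|) and the zero set of F is not
  Blaschke. If \<phi> were not constant, w (\<phi> \<circ> F - \<phi> 0) would be an element of Y that is not
  identically zero (\<phi> is nonconstant on the connected set F(D), which contains 0 and 1) and
  vanishes on this set.\<close>

lemma norm_power_eq_half_if_power_eq_neg_half:
  fixes z :: complex
  assumes "z ^ n = -1/2"
  shows "norm z ^ n = 1/2"
  using arg_cong[OF assms, of norm] by (simp add: norm_power)

lemma norm_lt_1_if_power_eq_neg_half:
  fixes z :: complex
  assumes "z ^ n = -1/2"
  shows "norm z < 1"
proof (rule ccontr)
  assume "\<not> norm z < 1"
  then have "1 \<le> norm z ^ n" by (simp add: one_le_power)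
  with norm_power_eq_half_if_power_eq_neg_half[OF assms] show False by simp
qed

lemma one_minus_norm_ge_if_power_eq_neg_half:
  fixes z :: complex
  assumes "z ^ n = -1/2" "n > 0"
  shows "1 / (2 * real n) \<le> 1 - norm z"
proof -
  have "1 + real n * (norm z - 1) \<le> (1 + (norm z - 1)) ^ n"
    by (rule Bernoulli_inequality) simp
  with norm_power_eq_half_if_power_eq_neg_half[OF assms(1)]
  have "1/2 \<le> real n * (1 - norm z)" by (simp add: algebra_simps)
  then show ?thesis using assms(2) by (simp add: field_simps)
qed

lemma power_eq_neg_half_exponent_unique:
  fixes z :: complex
  assumes "z ^ m = -1/2" "z ^ n = -1/2"
  shows "m = n"
proof -
  have half: "norm z ^ m = 1/2" "norm z ^ n = 1/2"
    using assms by (simp_all add: norm_power_eq_half_if_power_eq_neg_half)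
  then have "z \<noteq> 0" by (auto simp: power_0_left split: if_splits)
  then have "norm z ^ j < norm z ^ i" if "i < j" for i j
    using that norm_lt_1_if_power_eq_neg_half[OF assms(1)] by (intro power_strict_decreasing) auto
  with half show ?thesis by (metis less_irrefl nat_neq_iff)
qed

lemma ex_power_eq_neg_half:
  assumes "n > 0"
  obtains z :: complex where "z ^ n = -1/2"
proof -
  have "card {z::complex. z ^ n = -1/2} = n" using assms by (intro card_nth_roots) auto
  with assms have "{z::complex. z ^ n = -1/2} \<noteq> {}" by (metis card.empty less_irrefl)
  with that show ?thesis by blast
qed

lemma sum_ge_half_on_roots_of_neg_half:
  fixes g :: "complex \<Rightarrow> real"
  assumes "n > 0" and "\<And>z. z ^ n = -1/2 \<Longrightarrow> 1 - norm z \<le> g z"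
  shows "1/2 \<le> sum g {z. z ^ n = -1/2}"
proof -
  have "1/2 = (\<Sum>z\<in>{z::complex. z ^ n = -1/2}. 1 / (2 * real n))"
    using card_nth_roots[of "-1/2" n] assms(1) by simp
  also have "\<dots> \<le> sum g {z. z ^ n = -1/2}"
    using assms one_minus_norm_ge_if_power_eq_neg_half by (intro sum_mono) fastforce
  finally show ?thesis .
qed

lemma not_summable_on_roots_of_neg_half:
  fixes N :: "nat \<Rightarrow> nat" and g :: "complex \<Rightarrow> real"
  assumes "inj N" and N_pos: "\<And>k. N k > 0"
    and roots: "\<And>k z. z ^ N k = -1/2 \<Longrightarrow> z \<in> Z \<and> 1 - norm z \<le> g z"
    and nonneg: "\<And>z. z \<in> Z \<Longrightarrow> 0 \<le> g z"
  shows "\<not> g summable_on Z"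
proof
  assume summable: "g summable_on Z"
  define R where "R k = {z::complex. z ^ N k = -1/2}" for k
  have finite_R: "finite (R k)" for k
    unfolding R_def using N_pos by (rule finite_nth_roots)
  have disjoint_R: "R j \<inter> R k = {}" if "j \<noteq> k" for j k
    using that \<open>inj N\<close> power_eq_neg_half_exponent_unique by (fastforce simp: R_def inj_def)
  have "real n / 2 \<le> infsum g Z" for n
  proof -
    have "real n / 2 = (\<Sum>k<n. 1/2)" by simp
    also have "\<dots> \<le> (\<Sum>k<n. sum g (R k))"
      unfolding R_def using sum_ge_half_on_roots_of_neg_half[OF N_pos] roots
      by (intro sum_mono) blast
    also have "\<dots> = sum g (\<Union>k<n. R k)"
      using finite_R disjoint_R by (intro sum.UNION_disjoint[symmetric]) auto
    also have "\<dots> \<le> infsum g Z"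
      using finite_R roots nonneg by (intro finite_sum_le_infsum[OF summable]) (auto simp: R_def)
    finally show ?thesis .
  qed
  moreover obtain n :: nat where "2 * infsum g Z < real n"
    using reals_Archimedean2 by blast
  ultimately show False by (metis divide_le_eq_numeral1(1) mult.commute not_less)
qed

lemma holomorphic_eq_0_if_frequently_0:
  assumes "f holomorphic_on S" "open S" "connected S" "z \<in> S"
    and "frequently (\<lambda>y. y \<in> S \<and> f y = 0) (at z)" and "w \<in> S"
  shows "f w = 0"
proof (rule analytic_continuation[where f = f and S = S and \<xi> = z and U = "{y\<in>S. f y = 0}"])
  show "z islimpt {y\<in>S. f y = 0}"
    using assms(5) by (simp add: islimpt_conv_frequently_at)
qed (use assms in auto)

lemma holomorphic_frequently_nonzero:
  assumes "f holomorphic_on S" "open S" "connected S" "z \<in> S" "\<exists>y\<in>S. f y \<noteq> 0"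
  shows "frequently (\<lambda>y. f y \<noteq> 0) (at z)"
proof (rule ccontr)
  assume "\<not> frequently (\<lambda>y. f y \<noteq> 0) (at z)"
  then have "eventually (\<lambda>y. f y = 0) (at z)" by (simp add: not_frequently)
  moreover have "eventually (\<lambda>y. y \<in> S) (at z)"
    using assms(2,4) by (rule eventually_at_in_open')
  ultimately have "eventually (\<lambda>y. y \<in> S \<and> f y = 0) (at z)"
    by (rule eventually_conj[rotated])
  then have "frequently (\<lambda>y. y \<in> S \<and> f y = 0) (at z)"
    by (rule eventually_frequently[rotated]) simp
  with assms holomorphic_eq_0_if_frequently_0 show False by blast
qed

lemma holomorphic_mult_eq_0_imp_eq_0:
  assumes "f holomorphic_on S" "g holomorphic_on S" "open S" "connected S"
    and "\<And>z. z \<in> S \<Longrightarrow> f z * g z = 0" and "y \<in> S" "f y \<noteq> 0" and "w \<in> S"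
  shows "g w = 0"
proof -
  have "frequently (\<lambda>x. f x \<noteq> 0) (at y)"
    using assms(1,3,4,6,7) by (intro holomorphic_frequently_nonzero) auto
  moreover have "eventually (\<lambda>x. x \<in> S) (at y)"
    using assms(3,6) by (rule eventually_at_in_open')
  ultimately have "frequently (\<lambda>x. x \<in> S \<and> f x \<noteq> 0) (at y)"
    by (rule frequently_eventually_conj)
  then have "frequently (\<lambda>x. x \<in> S \<and> g x = 0) (at y)"
    by (rule frequently_elim1) (use assms(5) in fastforce)
  then show ?thesis by (rule holomorphic_eq_0_if_frequently_0[OF assms(2-4,6) _ assms(8)])
qed

lemma entire_eq_0_if_eq_0_on_connected:
  fixes \<psi> :: "complex \<Rightarrow> complex"
  assumes "\<psi> holomorphic_on UNIV" "connected U" "a \<in> U" "b \<in> U" "a \<noteq> b"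
    and "\<And>x. x \<in> U \<Longrightarrow> \<psi> x = 0"
  shows "\<psi> z = 0"
proof (rule analytic_continuation[where f = \<psi> and S = UNIV and U = U and \<xi> = a])
  show "a islimpt U" using assms(2-5) by (intro connected_imp_perfect) auto
qed (simp_all add: assms(1,6) connected_UNIV)

lemma not_blaschke_zeros_if_vanishes_on_roots_of_neg_half:
  fixes N :: "nat \<Rightarrow> nat"
  assumes hol: "h holomorphic_on ball 0 1" and nonzero: "\<exists>z\<in>ball 0 1. h z \<noteq> 0"
    and "inj N" "\<And>k. N k > 0" and vanishes: "\<And>k z. z ^ N k = -1/2 \<Longrightarrow> h z = 0"
  shows "\<not> blaschke_zeros h"
proof -
  have "1 - norm z \<le> real (nat (zorder h z)) * (1 - norm z)" if z: "z \<in> ball 0 1" "h z = 0" for z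
  proof -
    have "frequently (\<lambda>y. h y \<noteq> 0) (at z)"
      using holomorphic_frequently_nonzero[OF hol open_ball connected_ball z(1) nonzero] .
    then have "zorder h z > 0" using zorder_pos_iff[OF hol open_ball z(1)] z(2) by simp
    then show ?thesis using z(1) by (simp add: mult_le_cancel_right1)
  qed
  then show ?thesis unfolding blaschke_zeros_def
    using vanishes norm_lt_1_if_power_eq_neg_half
    by (intro not_summable_on_roots_of_neg_half[OF assms(3,4)]) auto
qed

lemma weight_le_weight_0:
  assumes "weight v" "z \<in> ball 0 1"
  shows "v z \<le> v 0"
proof -
  have radial: "v z = v (complex_of_real (norm z))"
    and decreasing: "\<And>r s. 0 \<le> r \<Longrightarrow> r < s \<Longrightarrow> s < 1 \<Longrightarrow> v (complex_of_real s) < v (complex_of_real r)"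
    using assms unfolding weight_def by blast+
  show ?thesis
  proof (cases "z = 0")
    case False
    then have "v (complex_of_real (norm z)) < v (complex_of_real 0)"
      using assms(2) by (intro decreasing) auto
    with radial show ?thesis by simp
  qed simp
qed

lemma weight_tail_thresholds:
  fixes \<epsilon> :: "nat \<Rightarrow> real"
  assumes "weight v" "\<And>k. \<epsilon> k > 0"
  obtains s where "\<And>k. 0 \<le> s k" "\<And>k. s k < 1"
    "\<And>k x. s k < x \<Longrightarrow> x < 1 \<Longrightarrow> v (complex_of_real x) \<le> \<epsilon> k"
proof -
  have lim: "((\<lambda>r. v (complex_of_real r)) \<longlongrightarrow> 0) (at_left 1)"
    using assms(1) unfolding weight_def by blast
  have "\<exists>b. 0 \<le> b \<and> b < 1 \<and> (\<forall>x. b < x \<longrightarrow> x < 1 \<longrightarrow> v (complex_of_real x) \<le> \<epsilon> k)" for k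
  proof -
    have "eventually (\<lambda>r. v (complex_of_real r) < \<epsilon> k) (at_left (1::real))"
      using order_tendstoD(2)[OF lim assms(2)] .
    then obtain b where "b < 1" "\<And>x. b < x \<Longrightarrow> x < 1 \<Longrightarrow> v (complex_of_real x) < \<epsilon> k"
      unfolding eventually_at_left_field by blast
    then show ?thesis by (intro exI[of _ "max b 0"]) (auto intro: less_imp_le)
  qed
  then show ?thesis using that by metis
qed

lemma lacunary_exponents_exist:
  fixes s :: "nat \<Rightarrow> real"
  assumes "\<And>k. 0 \<le> s k" "\<And>k. s k < 1"
  obtains N :: "nat \<Rightarrow> nat" where "strict_mono N" "\<And>k. k < N k" "\<And>k. 2 * s k ^ N k \<le> (1/2)^k"
proof -
  have "\<exists>M. s k ^ M < (1/2)^(k+1)" for k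
    using assms by (intro real_arch_pow_inv) auto
  then obtain M where M: "\<And>k. s k ^ M k < (1/2)^(k+1)" by metis
  define N where "N k = k + 1 + (\<Sum>j\<le>k. M j)" for k
  have "strict_mono N" unfolding strict_mono_Suc_iff N_def by simp
  moreover have "k < N k" for k unfolding N_def by simp
  moreover have "2 * s k ^ N k \<le> (1/2)^k" for k
  proof -
    have "M k \<le> N k" unfolding N_def using member_le_sum[of k "{..k}" M] by simp
    then have "s k ^ N k \<le> s k ^ M k"
      using assms by (intro power_decreasing) (auto intro: less_imp_le)
    with M[of k] show ?thesis by simp
  qed
  ultimately show ?thesis using that by blast
qed

text \<open>The limit only exists for |z| < 1; outside the disc the value is junk and never used.\<close>
definition lacunary_product :: "(nat \<Rightarrow> nat) \<Rightarrow> complex \<Rightarrow> complex" where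
  "lacunary_product N z = lim (\<lambda>n. \<Prod>k<n. 1 + 2 * z ^ N k)"

lemma uniform_limit_lacunary_product:
  assumes "\<And>k. k \<le> N k" "0 \<le> \<rho>" "\<rho> < 1"
  shows "uniform_limit (cball 0 \<rho>) (\<lambda>n z. \<Prod>k<n. 1 + 2 * z ^ N k) (lacunary_product N) sequentially"
proof -
  have "uniformly_convergent_on (cball 0 \<rho>) (\<lambda>n (z::complex). \<Prod>k<n. 1 + 2 * z ^ N k)"
  proof (rule uniformly_convergent_on_prod)
    show "uniformly_convergent_on (cball 0 \<rho>) (\<lambda>n (z::complex). \<Sum>k<n. norm (2 * z ^ N k))"
    proof (rule Weierstrass_m_test'[where M = "\<lambda>k. 2 * \<rho> ^ k"])
      fix k and z :: complex
      assume "z \<in> cball 0 \<rho>"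
      then have "norm z ^ N k \<le> \<rho> ^ N k" by (intro power_mono) auto
      also have "\<dots> \<le> \<rho> ^ k" using assms by (intro power_decreasing) auto
      finally show "norm (norm (2 * z ^ N k)) \<le> 2 * \<rho> ^ k" by (simp add: norm_mult norm_power)
    next
      show "summable (\<lambda>k. 2 * \<rho> ^ k)" using assms by (intro summable_mult summable_geometric) auto
    qed
  qed (auto intro!: continuous_intros)
  then show ?thesis
    unfolding uniformly_convergent_uniform_limit_iff lacunary_product_def .
qed

lemma tendsto_lacunary_product:
  assumes "\<And>k. k \<le> N k" "norm z < 1"
  shows "(\<lambda>n. \<Prod>k<n. 1 + 2 * z ^ N k) \<longlonglongrightarrow> lacunary_product N z"
  using assms by (intro tendsto_uniform_limitI[OF uniform_limit_lacunary_product[of N "norm z"]]) auto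

lemma holomorphic_lacunary_product:
  assumes "\<And>k. k \<le> N k"
  shows "lacunary_product N holomorphic_on ball 0 1"
proof (rule holomorphic_uniform_sequence[where f = "\<lambda>n z. \<Prod>k<n. 1 + 2 * z ^ N k"])
  fix x :: complex
  assume x: "x \<in> ball 0 1"
  define d where "d = (1 - norm x) / 2"
  have "cball x d \<subseteq> cball 0 (norm x + d)"
  proof
    fix y
    assume "y \<in> cball x d"
    then show "y \<in> cball 0 (norm x + d)"
      using norm_triangle_ineq[of x "y - x"] by (simp add: dist_norm norm_minus_commute)
  qed
  moreover have "norm x + d < 1" "d > 0" using x by (auto simp: d_def field_simps)
  ultimately show "\<exists>d>0. cball x d \<subseteq> ball 0 1 \<and>
      uniform_limit (cball x d) (\<lambda>n z. \<Prod>k<n. 1 + 2 * z ^ N k) (lacunary_product N) sequentially"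
    using assms
    by (intro exI[of _ d] conjI uniform_limit_on_subset[OF uniform_limit_lacunary_product]) auto
qed (auto intro!: holomorphic_intros)

lemma lacunary_product_0:
  assumes "\<And>k. N k > 0"
  shows "lacunary_product N 0 = 1"
  using assms by (simp add: lacunary_product_def zero_power)

lemma lacunary_product_eq_0_if_power_eq_neg_half:
  assumes "\<And>k. k \<le> N k" "z ^ N k = -1/2"
  shows "lacunary_product N z = 0"
proof -
  have "eventually (\<lambda>n. (\<Prod>j<n. 1 + 2 * z ^ N j) = 0) sequentially"
    unfolding eventually_sequentially using assms(2) by (auto intro!: exI[of _ "Suc k"] bexI[of _ k])
  then have "(\<lambda>n. \<Prod>j<n. 1 + 2 * z ^ N j) \<longlonglongrightarrow> 0" by (rule tendsto_eventually)
  with tendsto_lacunary_product[OF assms(1) norm_lt_1_if_power_eq_neg_half[OF assms(2)]]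
  show ?thesis using LIMSEQ_unique by blast
qed

lemma prod_one_plus_half_powers_le_exp_2: "(\<Prod>k<n. 1 + (1/2::real) ^ k) \<le> exp 2"
proof -
  have "(\<Prod>k<n. 1 + (1/2::real) ^ k) \<le> (\<Prod>k<n. exp ((1/2) ^ k))"
    by (intro prod_mono) (auto simp: add.commute exp_ge_add_one_self)
  also have "\<dots> = exp (\<Sum>k<n. (1/2) ^ k)" by (simp add: exp_sum)
  also have "\<dots> \<le> exp 2" using geometric_sum[of "1/2::real" n] by simp
  finally show ?thesis .
qed

lemma norm_lacunary_partial_product_le:
  fixes z :: complex and s :: "nat \<Rightarrow> real"
  assumes "\<And>k. 2 * s k ^ N k \<le> (1/2)^k" "norm z < 1"
  shows "norm (\<Prod>k<n. 1 + 2 * z ^ N k) \<le> exp 2 * 3 ^ card {k. k < n \<and> s k < norm z}"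
proof -
  define r where "r = norm z"
  have factor_le: "1 + 2 * r ^ N k \<le> (1 + (1/2)^k) * (if s k < r then 3 else 1)" for k
  proof (cases "s k < r")
    case True
    have "r ^ N k \<le> 1" using assms(2) by (simp add: r_def power_le_one)
    then have "1 + 2 * r ^ N k \<le> 3" by simp
    also have "\<dots> \<le> (1 + (1/2)^k) * 3" by simp
    finally show ?thesis using True by simp
  next
    case False
    then have "r ^ N k \<le> s k ^ N k" by (intro power_mono) (auto simp: r_def)
    then show ?thesis using False assms(1)[of k] by simp
  qed
  have "norm (\<Prod>k<n. 1 + 2 * z ^ N k) \<le> (\<Prod>k<n. 1 + 2 * r ^ N k)"
    unfolding prod_norm[symmetric] r_def
    by (intro prod_mono) (auto simp: norm_mult norm_power intro!: order.trans[OF norm_triangle_ineq])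
  also have "\<dots> \<le> (\<Prod>k<n. (1 + (1/2)^k) * (if s k < r then 3 else 1))"
    using factor_le by (intro prod_mono) (simp add: r_def)
  also have "\<dots> = (\<Prod>k<n. 1 + (1/2)^k) * 3 ^ card {k. k < n \<and> s k < r}"
  proof -
    have "(\<Prod>k<n. if s k < r then 3 else 1::real) = (\<Prod>k\<in>{k\<in>{..<n}. s k < r}. 3)"
      by (rule prod.inter_filter[symmetric]) simp
    also have "{k\<in>{..<n}. s k < r} = {k. k < n \<and> s k < r}" by auto
    finally show ?thesis by (simp add: prod.distrib)
  qed
  also have "\<dots> \<le> exp 2 * 3 ^ card {k. k < n \<and> s k < r}"
    using prod_one_plus_half_powers_le_exp_2[of n] by (intro mult_right_mono) auto
  finally show ?thesis by (simp add: r_def)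
qed

lemma mult_power_3_card_le:
  fixes A :: "nat set" and c :: real
  assumes "finite A" "0 \<le> c" "\<And>k. k \<in> A \<Longrightarrow> c \<le> (1/4)^k"
  shows "c * 3 ^ card A \<le> max c 3"
proof (cases "A = {}")
  case False
  define m where "m = Max A"
  have "m \<in> A" using assms(1) False by (simp add: m_def)
  have "A \<subseteq> {..m}" using assms(1) by (auto simp: m_def)
  then have "card A \<le> m + 1" using card_mono[of "{..m}" A] by simp
  then have "c * 3 ^ card A \<le> (1/4)^m * 3^(m+1)"
    using assms(2) assms(3)[OF \<open>m \<in> A\<close>] by (intro mult_mono power_increasing) auto
  also have "\<dots> = 3 * (3/4)^m" by (simp add: power_divide field_simps)
  also have "\<dots> \<le> 3" by (simp add: power_le_one)
  finally show ?thesis by simp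
qed simp

lemma lacunary_product_in_Hinf_v:
  fixes s :: "nat \<Rightarrow> real"
  assumes "weight v" and thresholds: "\<And>k x. s k < x \<Longrightarrow> x < 1 \<Longrightarrow> v (complex_of_real x) \<le> (1/4)^k"
    and "\<And>k. k \<le> N k" "\<And>k. 2 * s k ^ N k \<le> (1/2)^k"
  shows "lacunary_product N \<in> Hinf_v v"
proof -
  have "v z * norm (lacunary_product N z) \<le> exp 2 * max (v 0) 3" if z: "z \<in> ball 0 1" for z
  proof -
    have radial: "v z = v (complex_of_real (norm z))" and pos: "0 < v z"
      using assms(1) z unfolding weight_def by blast+
    have "v z * norm (\<Prod>k<n. 1 + 2 * z ^ N k) \<le> exp 2 * max (v 0) 3" for n
    proof -
      txt \<open>Each factor with s k < |z| costs a factor 3, which v z \<le> 4^-k absorbs.\<close>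
      let ?A = "{k. k < n \<and> s k < norm z}"
      have "v z * norm (\<Prod>k<n. 1 + 2 * z ^ N k) \<le> exp 2 * (v z * 3 ^ card ?A)"
        using norm_lacunary_partial_product_le[OF assms(4), of z n] z pos
        by (simp add: mult_left_mono mult.left_commute)
      also have "v z * 3 ^ card ?A \<le> max (v z) 3"
      proof (rule mult_power_3_card_le)
        show "v z \<le> (1/4)^k" if "k \<in> ?A" for k
          using thresholds[of k "norm z"] that radial z by simp
      qed (use pos in simp_all)
      also have "\<dots> \<le> max (v 0) 3"
        using weight_le_weight_0[OF assms(1) z] by simp
      finally show ?thesis by simp
    qed
    moreover have "(\<lambda>n. v z * norm (\<Prod>k<n. 1 + 2 * z ^ N k)) \<longlonglongrightarrow> v z * norm (lacunary_product N z)"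
      using tendsto_lacunary_product[OF assms(3)] z by (intro tendsto_intros) auto
    ultimately show ?thesis by (intro Lim_bounded[where M = 0]) auto
  qed
  then show ?thesis
    unfolding Hinf_v_def using holomorphic_lacunary_product[OF assms(3)] by blast
qed

lemma Hinf_v_function_vanishing_on_roots_of_neg_half:
  assumes "weight v"
  obtains F and N :: "nat \<Rightarrow> nat"
  where "F \<in> Hinf_v v" "F 0 = 1" "strict_mono N" "\<And>k. N k > 0"
    "\<And>k z. z ^ N k = -1/2 \<Longrightarrow> F z = 0"
proof -
  obtain s where s: "\<And>k. 0 \<le> s k" "\<And>k. s k < 1"
    and thresholds: "\<And>k x. s k < x \<Longrightarrow> x < 1 \<Longrightarrow> v (complex_of_real x) \<le> (1/4)^k"
    by (rule weight_tail_thresholds[OF assms, where \<epsilon> = "\<lambda>k. (1/4)^k"]) (simp_all, blast)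
  obtain N where N: "strict_mono N" "\<And>k. k < N k" "\<And>k. 2 * s k ^ N k \<le> (1/2)^k"
    using lacunary_exponents_exist[of s] s by blast
  have N_ge: "k \<le> N k" and N_pos: "0 < N k" for k
    using N(2)[of k] by simp_all
  show ?thesis
  proof (rule that[of "lacunary_product N" N])
    show "lacunary_product N \<in> Hinf_v v"
      using assms thresholds N_ge N(3) by (rule lacunary_product_in_Hinf_v)
    show "lacunary_product N 0 = 1" using N_pos by (rule lacunary_product_0)
    show "lacunary_product N z = 0" if "z ^ N k = -1/2" for k z
      using N_ge that by (rule lacunary_product_eq_0_if_power_eq_neg_half)
  qed (use N(1) N_pos in simp_all)
qed

lemma const_in_Hinf_v:
  assumes "weight v"
  shows "(\<lambda>_. a) \<in> Hinf_v v"
  unfolding Hinf_v_def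
proof (intro CollectI conjI exI ballI)
  fix z :: complex
  assume "z \<in> ball 0 1"
  then show "v z * norm a \<le> v 0 * norm a"
    by (intro mult_right_mono weight_le_weight_0[OF assms]) auto
qed simp

lemma HD_subspace_add:
  assumes "HD_subspace Y" "f \<in> Y" "g \<in> Y"
  shows "(\<lambda>z. f z + g z) \<in> Y"
  using assms(1) by (simp add: HD_subspace_def assms(2,3))

lemma HD_subspace_scale:
  assumes "HD_subspace Y" "f \<in> Y"
  shows "(\<lambda>z. c * f z) \<in> Y"
  using assms(1) by (simp add: HD_subspace_def assms(2))

lemma holomorphic_superpos_op:
  assumes "\<phi> holomorphic_on UNIV" "w holomorphic_on ball 0 1" "F holomorphic_on ball 0 1"
  shows "superpos_op \<phi> w F holomorphic_on ball 0 1"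
proof -
  have "(\<phi> \<circ> F) holomorphic_on ball 0 1"
    by (rule holomorphic_on_compose_gen[OF assms(3,1)]) simp
  then show ?thesis
    unfolding superpos_op_def o_def by (rule holomorphic_on_mult[OF assms(2)])
qed

lemma superpos_op_not_identically_0:
  fixes w \<psi> F :: "complex \<Rightarrow> complex"
  assumes "w holomorphic_on ball 0 1" "\<exists>z\<in>ball 0 1. w z \<noteq> 0"
    and "\<psi> holomorphic_on UNIV" "\<exists>x. \<psi> x \<noteq> 0"
    and "F holomorphic_on ball 0 1" "a \<in> ball 0 1" "b \<in> ball 0 1" "F a \<noteq> F b"
  shows "\<exists>z\<in>ball 0 1. superpos_op \<psi> w F z \<noteq> 0"
proof (rule ccontr)
  assume all_zero: "\<not> ?thesis"
  obtain y where y: "y \<in> ball 0 1" "w y \<noteq> 0" using assms(2) by blast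
  have "(\<psi> \<circ> F) holomorphic_on ball 0 1"
    by (rule holomorphic_on_compose_gen[OF assms(5,3)]) simp
  then have vanishes_on_image: "\<psi> (F z) = 0" if "z \<in> ball 0 1" for z
    unfolding o_def
    by (rule holomorphic_mult_eq_0_imp_eq_0[OF assms(1) _ open_ball connected_ball _ y that])
      (use all_zero in \<open>auto simp: superpos_op_def\<close>)
  have "\<psi> x = 0" for x
  proof (rule entire_eq_0_if_eq_0_on_connected[OF assms(3), where U = "F ` ball 0 1" and a = "F a" and b = "F b"])
    show "connected (F ` ball 0 1)"
      by (rule connected_continuous_image[OF holomorphic_on_imp_continuous_on[OF assms(5)] connected_ball])
  qed (use assms(6-8) vanishes_on_image in auto)
  with assms(4) show False by blast
qed

lemma superpos_op_into_Blaschke_space_imp_constant: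
  assumes "HD_subspace Y" and blaschke: "\<forall>h\<in>Y. (\<exists>z\<in>ball 0 1. h z \<noteq> 0) \<longrightarrow> blaschke_zeros h"
    and "weight v" "w holomorphic_on ball 0 1" "\<exists>z\<in>ball 0 1. w z \<noteq> 0" "w \<in> Y"
    and "\<phi> holomorphic_on UNIV" and maps: "\<forall>f\<in>Hinf_v v. superpos_op \<phi> w f \<in> Y"
  shows "\<exists>c. \<forall>z. \<phi> z = c"
proof (rule ccontr)
  assume nonconstant: "\<nexists>c. \<forall>z. \<phi> z = c"
  obtain F and N :: "nat \<Rightarrow> nat" where F: "F \<in> Hinf_v v" "F 0 = 1" "strict_mono N" "\<And>k. N k > 0"
    "\<And>k z. z ^ N k = -1/2 \<Longrightarrow> F z = 0"
    using Hinf_v_function_vanishing_on_roots_of_neg_half[OF assms(3)] by blast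
  obtain z0 :: complex where z0: "z0 ^ N 0 = -1/2" using ex_power_eq_neg_half[OF F(4)[of 0]] .
  have F_holomorphic: "F holomorphic_on ball 0 1" using F(1) by (simp add: Hinf_v_def)
  define \<psi> where "\<psi> x = \<phi> x - \<phi> 0" for x
  have \<psi>_holomorphic: "\<psi> holomorphic_on UNIV"
    unfolding \<psi>_def using assms(7) by (intro holomorphic_intros)
  have \<psi>_nonzero: "\<exists>x. \<psi> x \<noteq> 0" using nonconstant by (auto simp: \<psi>_def)
  define h where "h = superpos_op \<psi> w F"
  have "h = (\<lambda>z. superpos_op \<phi> w F z + (- \<phi> 0) * w z)"
    by (simp add: h_def \<psi>_def superpos_op_def fun_eq_iff algebra_simps)
  also have "\<dots> \<in> Y"
    by (rule HD_subspace_add[OF assms(1) maps[rule_format, OF F(1)] HD_subspace_scale[OF assms(1,6)]])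
  finally have "h \<in> Y" .
  moreover have nonzero: "\<exists>z\<in>ball 0 1. h z \<noteq> 0"
    unfolding h_def
  proof (rule superpos_op_not_identically_0[OF assms(4,5) \<psi>_holomorphic \<psi>_nonzero F_holomorphic])
    show "z0 \<in> ball 0 1" using norm_lt_1_if_power_eq_neg_half[OF z0] by simp
    show "F z0 \<noteq> F 0" using F(2) F(5)[OF z0] by simp
  qed simp
  moreover have "\<not> blaschke_zeros h"
  proof (rule not_blaschke_zeros_if_vanishes_on_roots_of_neg_half[OF _ nonzero strict_mono_imp_inj_on[OF F(3)] F(4)])
    show "h holomorphic_on ball 0 1"
      unfolding h_def by (rule holomorphic_superpos_op[OF \<psi>_holomorphic assms(4) F_holomorphic])
    show "h z = 0" if "z ^ N k = -1/2" for k z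
      using F(5)[OF that] by (simp add: h_def \<psi>_def superpos_op_def)
  qed
  ultimately show False using blaschke by blast
qed

theorem corollary1:
  fixes Y :: "(complex \<Rightarrow> complex) set" and v :: "complex \<Rightarrow> real"
    and w \<phi> :: "complex \<Rightarrow> complex"
  assumes "HD_subspace Y"
    and "\<forall>h\<in>Y. (\<exists>z\<in>ball 0 1. h z \<noteq> 0) \<longrightarrow> blaschke_zeros h"
    and "weight v"
    and "w holomorphic_on ball 0 1" and "\<exists>z\<in>ball 0 1. w z \<noteq> 0"
    and "\<phi> holomorphic_on UNIV" and "\<exists>z. \<phi> z \<noteq> 0"
  shows "(\<forall>f\<in>Hinf_v v. superpos_op \<phi> w f \<in> Y) \<longleftrightarrow> (w \<in> Y \<and> (\<exists>c. \<forall>z. \<phi> z = c))"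
proof
  assume maps: "\<forall>f\<in>Hinf_v v. superpos_op \<phi> w f \<in> Y"
  obtain a where "\<phi> a \<noteq> 0" using assms(7) by blast
  then have "w = (\<lambda>z. inverse (\<phi> a) * superpos_op \<phi> w (\<lambda>_. a) z)"
    by (simp add: superpos_op_def fun_eq_iff)
  also have "\<dots> \<in> Y"
    by (rule HD_subspace_scale[OF assms(1)]) (use maps const_in_Hinf_v[OF assms(3)] in blast)
  finally have "w \<in> Y" .
  with assms maps show "w \<in> Y \<and> (\<exists>c. \<forall>z. \<phi> z = c)"
    using superpos_op_into_Blaschke_space_imp_constant by blast
next
  assume "w \<in> Y \<and> (\<exists>c. \<forall>z. \<phi> z = c)"
  then obtain c where "w \<in> Y" "\<And>z. \<phi> z = c" by blast
  then show "\<forall>f\<in>Hinf_v v. superpos_op \<phi> w f \<in> Y"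
    using HD_subspace_scale[OF assms(1), of w c] by (simp add: superpos_op_def mult.commute)
qed

end
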